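(* Let $\ell\ge2$, $r_0,\dots,r_\ell\ge1$ integers, $d_0,\dots,d_\ell$ integers with $d_V=\sum_kd_k=0$, and $\mathbf{g}\ge1$ an integer. For every real $c>\max_k\mu_k$ there is a real number $\Phi(c)>0$ with $\mathring{\mathfrak{F}}(c)=(\mu_0-\mu_1)\Phi(c)$, where $\mathring{\mathfrak{F}}(c)$ is defined in the context. In particular, if $\mathring{\mathfrak{F}}(c)>0$ then $\mu_0>\mu_1$.
   Context: $\mu_k=d_k/r_k$, $r_V=\sum_kr_k$, $\pi_R=\prod_k(r_k-1)!$. For $1\le j\ne k\le\ell$: $\alpha_0=\frac{\pi_R}{r_V!}(cr_V-d_V)$, $\alpha_j=\frac{\pi_R}{(r_V+1)!}r_j(c(r_V+1)-d_V-\mu_j)$, $\alpha_{jk}=\frac{\pi_R}{(r_V+2)!}r_jr_k(c(r_V+2)-d_V-\mu_j-\mu_k)$, $\alpha_{jj}=\frac{\pi_R}{(r_V+2)!}r_j(r_j+1)(c(r_V+2)-d_V-2\mu_j)$, $\beta_0=\frac{\pi_R}{(r_V-1)!}((r_V-1)r_Vc+2(1-\mathbf{g})-(r_V-1)d_V)$, $\beta_j=\frac{\pi_Rr_j}{r_V!}(r_V(r_V-1)c+2(1-\mathbf{g})-d_V(r_V-2)-r_V\mu_j)$. $A_{ij}=\alpha_{ij}-\alpha_i\alpha_j/\alpha_0$ for $2\le i,j\le\ell$ (invertible for $c>\max\mu_k$), and $\mathring{\mathfrak{F}}(c)=(\alpha_0\beta_1-\alpha_1\beta_0)-\sum_{j,r=2}^\ell(A^{-1})_{rj}(\alpha_0\beta_r-\alpha_r\beta_0)\big(\alpha_{j1}-\frac{\alpha_1\alpha_j}{\alpha_0}\big)$.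 (When $V_0=U_0/L$, $V_1=L$ arise from the test configuration of a subbundle $L$ of an indecomposable summand $U_0$ of $E$ over a curve of genus $\ge1$, normalized so that $\deg E=0$, $\mathring{\mathfrak{F}}(c)$ at $c=m$ is a positive multiple of the relative Donaldson–Futaki invariant for the polarization $\mathcal{O}(1)_{\mathbb{P}(E)}\otimes\mathcal{O}(m)_C$.) *)

theory Defs
  imports Complex_Main "Jordan_Normal_Form.Gauss_Jordan_Elimination"
begin

definition mu :: "(nat \<Rightarrow> int) \<Rightarrow> (nat \<Rightarrow> int) \<Rightarrow> nat \<Rightarrow> real" where
  "mu r d k = real_of_int (d k) / real_of_int (r k)"

definition rV :: "nat \<Rightarrow> (nat \<Rightarrow> int) \<Rightarrow> int" where
  "rV l r = (\<Sum>k\<le>l. r k)"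

definition dV :: "nat \<Rightarrow> (nat \<Rightarrow> int) \<Rightarrow> int" where
  "dV l d = (\<Sum>k\<le>l. d k)"

definition piR :: "nat \<Rightarrow> (nat \<Rightarrow> int) \<Rightarrow> real" where
  "piR l r = (\<Prod>k\<le>l. fact (nat (r k - 1)))"

definition alpha0 :: "nat \<Rightarrow> (nat \<Rightarrow> int) \<Rightarrow> (nat \<Rightarrow> int) \<Rightarrow> real \<Rightarrow> real" where
  "alpha0 l r d c = piR l r / fact (nat (rV l r)) * (c * real_of_int (rV l r) - real_of_int (dV l d))"

definition alpha1 :: "nat \<Rightarrow> (nat \<Rightarrow> int) \<Rightarrow> (nat \<Rightarrow> int) \<Rightarrow> real \<Rightarrow> nat \<Rightarrow> real" where
  "alpha1 l r d c j = piR l r / fact (nat (rV l r + 1)) * real_of_int (r j)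
     * (c * (real_of_int (rV l r) + 1) - real_of_int (dV l d) - mu r d j)"

definition alpha2 :: "nat \<Rightarrow> (nat \<Rightarrow> int) \<Rightarrow> (nat \<Rightarrow> int) \<Rightarrow> real \<Rightarrow> nat \<Rightarrow> nat \<Rightarrow> real" where
  "alpha2 l r d c j k = (if j = k then
       piR l r / fact (nat (rV l r + 2)) * real_of_int (r j) * (real_of_int (r j) + 1)
         * (c * (real_of_int (rV l r) + 2) - real_of_int (dV l d) - 2 * mu r d j)
     else
       piR l r / fact (nat (rV l r + 2)) * real_of_int (r j) * real_of_int (r k)
         * (c * (real_of_int (rV l r) + 2) - real_of_int (dV l d) - mu r d j - mu r d k))"

definition beta0 :: "nat \<Rightarrow> (nat \<Rightarrow> int) \<Rightarrow> (nat \<Rightarrow> int) \<Rightarrow> int \<Rightarrow> real \<Rightarrow> real" where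
  "beta0 l r d g c = piR l r / fact (nat (rV l r - 1))
     * ((real_of_int (rV l r) - 1) * real_of_int (rV l r) * c + 2 * (1 - real_of_int g)
        - (real_of_int (rV l r) - 1) * real_of_int (dV l d))"

definition beta1 :: "nat \<Rightarrow> (nat \<Rightarrow> int) \<Rightarrow> (nat \<Rightarrow> int) \<Rightarrow> int \<Rightarrow> real \<Rightarrow> nat \<Rightarrow> real" where
  "beta1 l r d g c j = piR l r * real_of_int (r j) / fact (nat (rV l r))
     * (real_of_int (rV l r) * (real_of_int (rV l r) - 1) * c + 2 * (1 - real_of_int g)
        - real_of_int (dV l d) * (real_of_int (rV l r) - 2) - real_of_int (rV l r) * mu r d j)"

text \<open>The matrix A_{ij} (2 \<le> i,j \<le> \<ell>), stored with indices shifted by 2,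
  as an (\<ell>-1)\<times>(\<ell>-1) matrix.\<close>
definition Amat :: "nat \<Rightarrow> (nat \<Rightarrow> int) \<Rightarrow> (nat \<Rightarrow> int) \<Rightarrow> real \<Rightarrow> real mat" where
  "Amat l r d c = mat (l - 1) (l - 1) (\<lambda>(i, j).
      alpha2 l r d c (i + 2) (j + 2)
      - alpha1 l r d c (i + 2) * alpha1 l r d c (j + 2) / alpha0 l r d c)"

definition Ainv :: "nat \<Rightarrow> (nat \<Rightarrow> int) \<Rightarrow> (nat \<Rightarrow> int) \<Rightarrow> real \<Rightarrow> real mat" where
  "Ainv l r d c = the (mat_inverse (Amat l r d c))"

definition Fring :: "nat \<Rightarrow> (nat \<Rightarrow> int) \<Rightarrow> (nat \<Rightarrow> int) \<Rightarrow> int \<Rightarrow> real \<Rightarrow> real" where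
  "Fring l r d g c =
     (alpha0 l r d c * beta1 l r d g c 1 - alpha1 l r d c 1 * beta0 l r d g c)
     - (\<Sum>j\<in>{2..l}. \<Sum>s\<in>{2..l}.
          Ainv l r d c $$ (s - 2, j - 2)
          * (alpha0 l r d c * beta1 l r d g c s - alpha1 l r d c s * beta0 l r d g c)
          * (alpha2 l r d c j 1 - alpha1 l r d c 1 * alpha1 l r d c j / alpha0 l r d c))"

end

theory Submission
  imports Defs "Jordan_Normal_Form.Determinant"
begin

text \<open>
  Let A_ij = alpha_ij - alpha_i alpha_j / alpha_0 for 0 <= i, j <= l. When d_V = 0, A is a
  positive multiple of the symmetric matrix
    M_ij = r_i y_i [i = j] - r_i r_j (c r_V + x_i + x_j + kappa x_i x_j) / (r_V + 1),
  where x_k = c - mu_k > 0, y_k = c r_V + 2 x_k and kappa = (r_V + 2) / (c r_V). The rows of M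
  sum to zero, and its quadratic form is a positive combination of the weighted variances of w
  for the weights r_k and r_k x_k plus a square, hence positive whenever w is not constant, in
  particular when w_0 = 0 and w is not zero.

  Moreover alpha_0 beta_j - alpha_j beta_0 = K r_j mu_j with K < 0 (this is where the genus
  bound enters), and this vector is A u for u_j a negative constant times 1 / y_j. Eliminating
  the indices 2..l with the inverse of the trailing block of A turns the invariant into w^T A u,
  where w = (0, 1, *) is chosen so that (A w)_k = 0 for k >= 2. Since the columns of A sum to
  zero, (A w)_0 = - (A w)_1 = - w^T A w < 0, so the invariant equals (w^T A w) (u_1 - u_0), a
  positive multiple of 1 / y_0 - 1 / y_1 and hence of mu_0 - mu_1.
\<close>

lemma weighted_variance_eq:
  fixes a z :: "'a \<Rightarrow> real"
  shows "(\<Sum>i\<in>I. a i) * (\<Sum>i\<in>I. a i * (z i)\<^sup>2) - (\<Sum>i\<in>I. a i * z i)\<^sup>2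
    = (\<Sum>i\<in>I. \<Sum>j\<in>I. a i * a j * (z i - z j)\<^sup>2) / 2"
proof -
  have "(\<Sum>i\<in>I. \<Sum>j\<in>I. a i * a j * (z i - z j)\<^sup>2)
      = (\<Sum>i\<in>I. \<Sum>j\<in>I. a i * (a j * (z j)\<^sup>2)) + (\<Sum>i\<in>I. \<Sum>j\<in>I. (a i * (z i)\<^sup>2) * a j)
        - (\<Sum>i\<in>I. \<Sum>j\<in>I. 2 * ((a i * z i) * (a j * z j)))"
    by (simp add: sum_subtractf sum.distrib[symmetric] power2_eq_square algebra_simps)
  also have "\<dots> = (\<Sum>i\<in>I. a i) * (\<Sum>j\<in>I. a j * (z j)\<^sup>2) + (\<Sum>i\<in>I. a i * (z i)\<^sup>2) * (\<Sum>j\<in>I. a j)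
      - 2 * ((\<Sum>i\<in>I. a i * z i) * (\<Sum>j\<in>I. a j * z j))"
    unfolding sum_product by (simp add: sum_distrib_left)
  finally show ?thesis by (simp add: power2_eq_square algebra_simps)
qed

lemma weighted_variance_nonneg:
  fixes a z :: "'a \<Rightarrow> real"
  assumes "\<And>i. i \<in> I \<Longrightarrow> a i \<ge> 0"
  shows "(\<Sum>i\<in>I. a i * z i)\<^sup>2 \<le> (\<Sum>i\<in>I. a i) * (\<Sum>i\<in>I. a i * (z i)\<^sup>2)"
proof -
  have "0 \<le> (\<Sum>i\<in>I. \<Sum>j\<in>I. a i * a j * (z i - z j)\<^sup>2)"
    using assms by (intro sum_nonneg mult_nonneg_nonneg) auto
  then show ?thesis using weighted_variance_eq[of a I z] by simp
qed

lemma weighted_variance_pos: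
  fixes a z :: "'a \<Rightarrow> real"
  assumes "finite I" "\<And>i. i \<in> I \<Longrightarrow> a i > 0" "i \<in> I" "j \<in> I" "z i \<noteq> z j"
  shows "(\<Sum>i\<in>I. a i * z i)\<^sup>2 < (\<Sum>i\<in>I. a i) * (\<Sum>i\<in>I. a i * (z i)\<^sup>2)"
proof -
  have "0 < (\<Sum>i\<in>I. \<Sum>j\<in>I. a i * a j * (z i - z j)\<^sup>2)"
  proof (rule sum_pos2[OF assms(1,3)])
    show "0 < (\<Sum>j\<in>I. a i * a j * (z i - z j)\<^sup>2)"
    proof (rule sum_pos2[OF assms(1,4)])
      show "0 < a i * a j * (z i - z j)\<^sup>2" using assms by simp
    qed (use assms in \<open>auto intro!: mult_nonneg_nonneg simp: less_imp_le\<close>)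
  qed (use assms in \<open>auto intro!: sum_nonneg mult_nonneg_nonneg simp: less_imp_le\<close>)
  then show ?thesis using weighted_variance_eq[of a I z] by simp
qed

lemma sum_atLeastAtMost_2_shift: "(\<Sum>j\<in>{2..l}. f j) = (\<Sum>k<l - 1. f (k + 2 :: nat))"
  by (rule sum.reindex_bij_witness[of _ "\<lambda>k. k + 2" "\<lambda>j. j - 2"]) (auto intro!: arg_cong[of _ _ f])

lemma sum_atMost_split_0_1:
  assumes "2 \<le> (l :: nat)"
  shows "(\<Sum>k\<le>l. f k) = f 0 + f 1 + (\<Sum>k\<in>{2..l}. f k)"
proof -
  have "{..l} = {0, 1} \<union> {2..l}" using assms by auto
  then show ?thesis by (simp add: add.assoc)
qed

lemma mat_inverse_exists:
  fixes A :: "'a :: field mat"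
  assumes A: "A \<in> carrier_mat n n"
    and ker: "\<And>v. v \<in> carrier_vec n \<Longrightarrow> A *\<^sub>v v = 0\<^sub>v n \<Longrightarrow> v = 0\<^sub>v n"
  shows "\<exists>B. mat_inverse A = Some B"
proof -
  have "det A \<noteq> 0" using ker det_0_iff_vec_prod_zero[OF A] by blast
  then have "A \<in> Units (ring_mat TYPE('a) n ())" by (rule det_non_zero_imp_unit[OF A])
  then show ?thesis using mat_inverse(1)[OF A] by fastforce
qed

definition trailing_block :: "nat \<Rightarrow> (nat \<Rightarrow> nat \<Rightarrow> 'a) \<Rightarrow> 'a mat" where
  "trailing_block l A = mat (l - 1) (l - 1) (\<lambda>(i, j). A (i + 2) (j + 2))"

definition quad_form :: "nat \<Rightarrow> (nat \<Rightarrow> nat \<Rightarrow> real) \<Rightarrow> (nat \<Rightarrow> real) \<Rightarrow> real" where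
  "quad_form l A w = (\<Sum>i\<le>l. w i * (\<Sum>j\<le>l. A i j * w j))"

lemma trailing_block_carrier: "trailing_block l A \<in> carrier_mat (l - 1) (l - 1)"
  unfolding trailing_block_def by simp

lemma trailing_block_mult_vec_index:
  fixes A :: "nat \<Rightarrow> nat \<Rightarrow> 'a :: comm_semiring_0"
  assumes "v \<in> carrier_vec (l - 1)" "i \<in> {2..l}"
  shows "(trailing_block l A *\<^sub>v v) $ (i - 2) = (\<Sum>k\<in>{2..l}. A i k * v $ (k - 2))"
proof -
  obtain i' where "i = i' + 2" using assms(2) by (metis atLeastAtMost_iff le_add_diff_inverse2)
  then show ?thesis using assms unfolding sum_atLeastAtMost_2_shift
    by (auto simp: trailing_block_def scalar_prod_def lessThan_atLeast0 intro!: sum.cong)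
qed

lemma trailing_block_mult_index:
  fixes A :: "nat \<Rightarrow> nat \<Rightarrow> 'a :: comm_semiring_0"
  assumes "B \<in> carrier_mat (l - 1) m" "i \<in> {2..l}" "j < m"
  shows "(trailing_block l A * B) $$ (i - 2, j) = (\<Sum>k\<in>{2..l}. A i k * B $$ (k - 2, j))"
proof -
  obtain i' where "i = i' + 2" using assms(2) by (metis atLeastAtMost_iff le_add_diff_inverse2)
  then show ?thesis using assms unfolding sum_atLeastAtMost_2_shift
    by (auto simp: trailing_block_def scalar_prod_def lessThan_atLeast0 intro!: sum.cong)
qed

lemma trailing_block_invertible:
  assumes posdef: "\<And>w i. w 0 = 0 \<Longrightarrow> i \<le> l \<Longrightarrow> w i \<noteq> 0 \<Longrightarrow> 0 < quad_form l A w"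
  shows "\<exists>B. mat_inverse (trailing_block l A) = Some B"
proof (rule mat_inverse_exists[OF trailing_block_carrier])
  fix v assume v: "v \<in> carrier_vec (l - 1)" and kernel: "trailing_block l A *\<^sub>v v = 0\<^sub>v (l - 1)"
  define w where "w i = (if i \<in> {2..l} then v $ (i - 2) else 0)" for i
  have row_zero: "(\<Sum>j\<le>l. A i j * w j) = 0" if "i \<in> {2..l}" for i
  proof -
    have "(\<Sum>j\<le>l. A i j * w j) = (\<Sum>j\<in>{2..l}. A i j * v $ (j - 2))"
      by (rule sum.mono_neutral_cong_right) (auto simp: w_def)
    also have "\<dots> = (trailing_block l A *\<^sub>v v) $ (i - 2)"
      by (rule trailing_block_mult_vec_index[OF v that, symmetric])
    finally show ?thesis using kernel that by auto
  qed
  have "quad_form l A w = 0"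
    unfolding quad_form_def by (rule sum.neutral) (metis mult_eq_0_iff row_zero w_def)
  then have w_zero: "w i = 0" if "i \<le> l" for i
    using posdef[of w i] that by (force simp: w_def)
  have "v $ k = 0" if "k < l - 1" for k
  proof -
    have "k + 2 \<le> l" using that by simp
    then have "w (k + 2) = 0" by (rule w_zero)
    then show ?thesis using \<open>k + 2 \<le> l\<close> by (simp add: w_def)
  qed
  then show "v = 0\<^sub>v (l - 1)"
    using v by (intro eq_vecI) auto
qed

lemma trailing_block_inverse_apply:
  fixes A :: "nat \<Rightarrow> nat \<Rightarrow> 'a :: field"
  assumes inv: "mat_inverse (trailing_block l A) = Some B" and s: "s \<in> {2..l}"
  shows "(\<Sum>k\<in>{2..l}. A s k * (\<Sum>j\<in>{2..l}. B $$ (k - 2, j - 2) * a j)) = a s"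
proof -
  have AB: "trailing_block l A * B = 1\<^sub>m (l - 1)" and B: "B \<in> carrier_mat (l - 1) (l - 1)"
    using mat_inverse(2)[OF trailing_block_carrier inv] by auto
  have "(\<Sum>k\<in>{2..l}. A s k * B $$ (k - 2, j - 2)) = (if s = j then 1 else 0)" if j: "j \<in> {2..l}" for j
  proof -
    have "j - 2 < l - 1" and "s - 2 = j - 2 \<longleftrightarrow> s = j" using s j by auto
    then show ?thesis using trailing_block_mult_index[OF B s, of "j - 2" A] AB s by auto
  qed
  then have "(\<Sum>j\<in>{2..l}. (\<Sum>k\<in>{2..l}. A s k * B $$ (k - 2, j - 2)) * a j)
      = (\<Sum>j\<in>{2..l}. if s = j then a j else 0)"
    by (intro sum.cong refl) simp
  also have "\<dots> = a s" using s by simp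
  finally show ?thesis
    unfolding sum_distrib_left sum_distrib_right by (subst sum.swap) (simp add: mult.assoc)
qed

lemma sum_mult_sym_swap:
  fixes A :: "nat \<Rightarrow> nat \<Rightarrow> 'a :: comm_semiring_0"
  assumes "\<And>i j. i \<le> l \<Longrightarrow> j \<le> l \<Longrightarrow> A i j = A j i"
  shows "(\<Sum>i\<le>l. (\<Sum>k\<le>l. A i k * u k) * w i) = (\<Sum>k\<le>l. u k * (\<Sum>i\<le>l. A k i * w i))"
proof -
  have "(\<Sum>i\<le>l. (\<Sum>k\<le>l. A i k * u k) * w i) = (\<Sum>i\<le>l. \<Sum>k\<le>l. A i k * u k * w i)"
    by (simp add: sum_distrib_right)
  also have "\<dots> = (\<Sum>i\<le>l. \<Sum>k\<le>l. u k * (A k i * w i))"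
    by (intro sum.cong refl) (simp add: assms[of _ i for i] mult_ac)
  also have "\<dots> = (\<Sum>k\<le>l. u k * (\<Sum>i\<le>l. A k i * w i))"
    unfolding sum_distrib_left by (rule sum.swap)
  finally show ?thesis .
qed

lemma trailing_block_elimination:
  fixes A :: "nat \<Rightarrow> nat \<Rightarrow> real"
  assumes l: "2 \<le> l"
    and sym: "\<And>i j. i \<le> l \<Longrightarrow> j \<le> l \<Longrightarrow> A i j = A j i"
    and col_sum: "\<And>j. j \<le> l \<Longrightarrow> (\<Sum>i\<le>l. A i j) = 0"
    and posdef: "\<And>w i. w 0 = 0 \<Longrightarrow> i \<le> l \<Longrightarrow> w i \<noteq> 0 \<Longrightarrow> 0 < quad_form l A w"
    and inv: "mat_inverse (trailing_block l A) = Some B"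
  shows "\<exists>m > 0. \<forall>b u. (\<forall>i \<le> l. b i = (\<Sum>k\<le>l. A i k * u k)) \<longrightarrow>
      b 1 - (\<Sum>j\<in>{2..l}. \<Sum>s\<in>{2..l}. B $$ (s - 2, j - 2) * b s * A j 1) = m * (u 1 - u 0)"
proof -
  define z where "z s = (\<Sum>j\<in>{2..l}. B $$ (s - 2, j - 2) * A j 1)" for s
  define w where "w i = (if i = 1 then 1 else if i \<in> {2..l} then - z i else 0)" for i
  define v where "v i = (\<Sum>j\<le>l. A i j * w j)" for i
  have w01: "w 0 = 0" "w 1 = 1" by (auto simp: w_def)
  have v_trailing: "v s = 0" if s: "s \<in> {2..l}" for s
    using trailing_block_inverse_apply[OF inv s, of "\<lambda>j. A j 1"]
    unfolding v_def z_def[symmetric] sum_atMost_split_0_1[OF l] by (simp add: w01 w_def sum_negf)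
  have v0: "v 0 = - v 1"
  proof -
    have "(\<Sum>i\<le>l. v i) = (\<Sum>j\<le>l. (\<Sum>i\<le>l. A i j) * w j)"
      unfolding v_def sum_distrib_right by (rule sum.swap)
    also have "\<dots> = 0" by (simp add: col_sum)
    finally show ?thesis unfolding sum_atMost_split_0_1[OF l] by (simp add: v_trailing)
  qed
  have m_pos: "0 < v 1"
  proof -
    have "quad_form l A w = v 1"
      unfolding quad_form_def v_def[symmetric] sum_atMost_split_0_1[OF l] by (simp add: w_def v_trailing)
    then show ?thesis using posdef[of w 1] l w01 by simp
  qed
  show ?thesis
  proof (intro exI[of _ "v 1"] conjI m_pos allI impI)
    fix b u :: "nat \<Rightarrow> real" assume b: "\<forall>i \<le> l. b i = (\<Sum>k\<le>l. A i k * u k)"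
    have "(\<Sum>j\<in>{2..l}. \<Sum>s\<in>{2..l}. B $$ (s - 2, j - 2) * b s * A j 1) = (\<Sum>s\<in>{2..l}. b s * z s)"
      unfolding z_def sum_distrib_left by (subst sum.swap) (simp add: mult_ac)
    then have "b 1 - (\<Sum>j\<in>{2..l}. \<Sum>s\<in>{2..l}. B $$ (s - 2, j - 2) * b s * A j 1) = (\<Sum>i\<le>l. b i * w i)"
      unfolding sum_atMost_split_0_1[OF l] by (simp add: w01 w_def sum_negf)
    also have "\<dots> = (\<Sum>k\<le>l. u k * v k)"
      using b sum_mult_sym_swap[of l A u w, OF sym] by (simp add: v_def)
    also have "\<dots> = v 1 * (u 1 - u 0)"
      unfolding sum_atMost_split_0_1[OF l] by (simp add: v0 v_trailing algebra_simps)
    finally show "b 1 - (\<Sum>j\<in>{2..l}. \<Sum>s\<in>{2..l}. B $$ (s - 2, j - 2) * b s * A j 1) = v 1 * (u 1 - u 0)" .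
  qed
qed

locale futaki_setting =
  fixes l :: nat and r d :: "nat \<Rightarrow> int" and g :: int and c :: real
  assumes two_le_l: "2 \<le> l"
    and rank_pos: "\<And>k. k \<le> l \<Longrightarrow> r k \<ge> 1"
    and degree_sum: "(\<Sum>k\<le>l. d k) = 0"
    and genus_pos: "g \<ge> 1"
    and slope_less: "\<And>k. k \<le> l \<Longrightarrow> mu r d k < c"
begin

definition "R = real_of_int (rV l r)"
definition "rk k = real_of_int (r k)"
definition "x k = c - mu r d k"
definition "y k = c * R + 2 * x k"
definition "Q = piR l r / fact (nat (rV l r + 2))"

lemma rk_pos: "k \<le> l \<Longrightarrow> rk k > 0"
  using rank_pos unfolding rk_def by force

lemma R_eq_sum: "R = (\<Sum>k\<le>l. rk k)"
  unfolding R_def rV_def rk_def by simp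

lemma sum_rk_mu: "(\<Sum>k\<le>l. rk k * mu r d k) = 0"
proof -
  have "(\<Sum>k\<le>l. rk k * mu r d k) = (\<Sum>k\<le>l. real_of_int (d k))"
  proof (intro sum.cong refl)
    fix k assume "k \<in> {..l}"
    then have "r k \<noteq> 0" using rank_pos by force
    then show "rk k * mu r d k = real_of_int (d k)" by (simp add: mu_def rk_def)
  qed
  also have "\<dots> = 0" using degree_sum by (metis of_int_0 of_int_sum)
  finally show ?thesis .
qed

lemma R_ge_3: "R \<ge> 3"
proof -
  have "(\<Sum>k\<le>l. 1) \<le> (\<Sum>k\<le>l. rk k)"
    using rank_pos by (intro sum_mono) (simp add: rk_def)
  then show ?thesis using two_le_l R_eq_sum by simp
qed

lemma x_pos: "k \<le> l \<Longrightarrow> x k > 0"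
  using slope_less unfolding x_def by auto

lemma sum_rk_x: "(\<Sum>k\<le>l. rk k * x k) = c * R"
  unfolding x_def R_eq_sum by (simp add: right_diff_distrib sum_subtractf sum_rk_mu
      sum_distrib_left mult.commute)

lemma c_pos: "c > 0"
proof -
  have "0 < (\<Sum>k\<le>l. rk k * x k)"
    using rk_pos x_pos by (intro sum_pos) auto
  then show ?thesis using R_ge_3 by (simp add: sum_rk_x zero_less_mult_iff)
qed

lemma y_pos: "k \<le> l \<Longrightarrow> y k > 0"
  using x_pos[of k] c_pos R_ge_3 unfolding y_def by (simp add: add_pos_pos)

lemma Q_pos: "Q > 0"
  unfolding Q_def piR_def by (simp add: prod_pos)

lemma piR_div_fact:
  "piR l r / fact (nat (rV l r + 1)) = Q * (R + 2)"
  "piR l r / fact (nat (rV l r)) = Q * (R + 2) * (R + 1)"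
  "piR l r / fact (nat (rV l r - 1)) = Q * (R + 2) * (R + 1) * R"
proof -
  have "nat (rV l r) > 0" using R_ge_3 unfolding R_def by simp
  then obtain n where n: "nat (rV l r) = Suc n" using gr0_implies_Suc by blast
  then have "rV l r = int n + 1" by simp
  then have nat_eqs: "nat (rV l r + 1) = Suc (Suc n)" "nat (rV l r + 2) = Suc (Suc (Suc n))"
      "nat (rV l r - 1) = n" and R: "real n = R - 1"
    unfolding R_def by simp_all
  have facts: "fact (Suc n) = R * fact n" "fact (Suc (Suc n)) = (R + 1) * R * fact n"
      "fact (Suc (Suc (Suc n))) = (R + 2) * (R + 1) * R * (fact n :: real)"
    by (simp_all add: R algebra_simps)
  have "fact n \<noteq> (0 :: real)" "R \<noteq> 0" "R + 1 \<noteq> 0" "R + 2 \<noteq> 0" using R_ge_3 by auto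
  then show "piR l r / fact (nat (rV l r + 1)) = Q * (R + 2)"
    "piR l r / fact (nat (rV l r)) = Q * (R + 2) * (R + 1)"
    "piR l r / fact (nat (rV l r - 1)) = Q * (R + 2) * (R + 1) * R"
    unfolding Q_def n nat_eqs facts by (simp_all add: divide_simps)
qed

lemma dV_zero: "dV l d = 0"
  using degree_sum unfolding dV_def by simp

lemma alpha0_eq: "alpha0 l r d c = Q * (R + 2) * (R + 1) * (c * R)"
  unfolding alpha0_def dV_zero piR_div_fact by (simp add: R_def)

lemma alpha1_eq: "alpha1 l r d c j = Q * (R + 2) * rk j * (c * R + x j)"
  unfolding alpha1_def dV_zero piR_div_fact by (simp add: R_def rk_def x_def algebra_simps)

lemma alpha2_eq:
  "alpha2 l r d c i j = Q * (rk i * rk j * (c * R + x i + x j) + (if i = j then rk i * y i else 0))"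
  unfolding alpha2_def dV_zero Q_def[symmetric] by (simp add: R_def rk_def x_def y_def algebra_simps)

lemma beta0_eq: "beta0 l r d g c = Q * (R + 2) * (R + 1) * R * ((R - 1) * R * c + 2 * (1 - real_of_int g))"
  unfolding beta0_def dV_zero piR_div_fact by (simp add: R_def)

lemma beta1_eq:
  "beta1 l r d g c j = Q * (R + 2) * (R + 1) * rk j * (R * (R - 1) * c + 2 * (1 - real_of_int g) - R * mu r d j)"
  unfolding beta1_def dV_zero times_divide_eq_left[symmetric] piR_div_fact by (simp add: R_def rk_def)

definition "M i j = (if i = j then rk i * y i else 0)
  - rk i * rk j * (c * R + x i + x j + (R + 2) / (c * R) * x i * x j) / (R + 1)"

definition "A i j = alpha2 l r d c i j - alpha1 l r d c i * alpha1 l r d c j / alpha0 l r d c"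

lemma A_eq: "A i j = Q * M i j"
proof -
  have "Q \<noteq> 0" "c \<noteq> 0" "R \<noteq> 0" "R + 1 \<noteq> 0" "R + 2 \<noteq> 0"
    using Q_pos c_pos R_ge_3 by auto
  then show ?thesis
    unfolding A_def alpha0_eq alpha1_eq alpha2_eq M_def by (simp add: divide_simps) (simp add: algebra_simps)
qed

definition "K = Q\<^sup>2 * (R + 2)\<^sup>2 * (R + 1) * R * (2 * (1 - real_of_int g) - 2 * R * c)"

lemma alpha_beta_eq: "alpha0 l r d c * beta1 l r d g c j - alpha1 l r d c j * beta0 l r d g c
  = K * rk j * mu r d j"
  unfolding alpha0_eq alpha1_eq beta0_eq beta1_eq K_def x_def by (simp add: power2_eq_square algebra_simps)

lemma K_neg: "K < 0"
proof -
  have "0 < 2 * R * c" "1 \<le> real_of_int g" using genus_pos c_pos R_ge_3 by simp_all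
  then have "2 * (1 - real_of_int g) - 2 * R * c < 0" by (simp add: algebra_simps)
  then show ?thesis using Q_pos R_ge_3 unfolding K_def by (simp add: mult_pos_neg)
qed

lemma M_sym: "M i j = M j i"
  unfolding M_def by (simp add: algebra_simps)

lemma M_mult_vec:
  "(\<Sum>j\<le>l. M i j * w j) = (if i \<le> l then rk i * y i * w i else 0)
    - rk i / (R + 1) * (c * R * (\<Sum>j\<le>l. rk j * w j) + (\<Sum>j\<le>l. rk j * x j * w j)
        + x i * (\<Sum>j\<le>l. rk j * w j) + x i * ((R + 2) / (c * R)) * (\<Sum>j\<le>l. rk j * x j * w j))"
proof -
  define C where "C = rk i / (R + 1)"
  have "c \<noteq> 0" "R \<noteq> 0" "R + 1 \<noteq> 0" using c_pos R_ge_3 by auto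
  then have "(\<Sum>j\<le>l. M i j * w j) = (\<Sum>j\<le>l. (if i = j then rk i * y i * w i else 0)
      - C * (c * R * (rk j * w j) + rk j * x j * w j
        + x i * (rk j * w j) + x i * ((R + 2) / (c * R)) * (rk j * x j * w j)))"
    by (intro sum.cong refl) (auto simp: M_def C_def field_simps)
  also have "\<dots> = (if i \<le> l then rk i * y i * w i else 0)
      - C * (c * R * (\<Sum>j\<le>l. rk j * w j) + (\<Sum>j\<le>l. rk j * x j * w j)
        + x i * (\<Sum>j\<le>l. rk j * w j) + x i * ((R + 2) / (c * R)) * (\<Sum>j\<le>l. rk j * x j * w j))"
    by (simp add: sum_subtractf sum.distrib sum_distrib_left distrib_left)
  finally show ?thesis unfolding C_def .
qed

lemma M_row_sum:
  assumes "i \<le> l"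
  shows "(\<Sum>j\<le>l. M i j) = 0"
proof -
  have "c \<noteq> 0" "R \<noteq> 0" "R + 1 \<noteq> 0" using c_pos R_ge_3 by auto
  then have "(\<Sum>j\<le>l. M i j * 1) = rk i * y i - rk i / (R + 1) * ((R + 1) * y i)"
    unfolding M_mult_vec using assms
    by (simp add: R_eq_sum[symmetric] sum_rk_x y_def divide_simps) (simp add: algebra_simps)
  then show ?thesis using \<open>R + 1 \<noteq> 0\<close> by simp
qed

definition "\<gamma> = ((\<Sum>j\<le>l. rk j / y j) + (R + 2) / (c * R) * (\<Sum>j\<le>l. rk j * x j / y j)) / (R + 1)"

lemma \<gamma>_pos: "\<gamma> > 0"
proof -
  have "(\<Sum>j\<le>l. rk j / y j) > 0" "(\<Sum>j\<le>l. rk j * x j / y j) > 0"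
    using rk_pos x_pos y_pos by (auto intro!: sum_pos)
  then show ?thesis unfolding \<gamma>_def using c_pos R_ge_3 by (simp add: add_pos_pos)
qed

lemma M_mult_inv_y:
  assumes "i \<le> l"
  shows "(\<Sum>j\<le>l. M i j * (1 / y j)) = \<gamma> * rk i * mu r d i"
proof -
  define a where "a = (\<Sum>j\<le>l. rk j / y j)"
  define b where "b = (\<Sum>j\<le>l. rk j * x j / y j)"
  have "c * R * a + 2 * b = (\<Sum>j\<le>l. rk j * y j / y j)"
    unfolding a_def b_def y_def by (simp add: sum_distrib_left sum.distrib add_divide_distrib algebra_simps)
  also have "\<dots> = R" using y_pos by (simp add: R_eq_sum less_imp_neq[symmetric])
  finally have a_eq: "a = (R - 2 * b) / (c * R)" using c_pos R_ge_3 by (simp add: field_simps)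
  have row: "(\<Sum>j\<le>l. M i j * (1 / y j))
      = rk i - rk i / (R + 1) * (c * R * a + b + x i * a + x i * ((R + 2) / (c * R)) * b)"
    unfolding M_mult_vec a_def b_def using assms y_pos[OF assms] by simp
  have \<gamma>_eq: "\<gamma> = (a + (R + 2) / (c * R) * b) / (R + 1)" and mu_eq: "mu r d i = c - x i"
    unfolding \<gamma>_def a_def b_def x_def by simp_all
  have "c \<noteq> 0" "R \<noteq> 0" "R + 1 \<noteq> 0" using c_pos R_ge_3 by auto
  then show ?thesis unfolding row \<gamma>_eq mu_eq a_eq by (simp add: divide_simps) (simp add: algebra_simps)
qed

lemma quad_form_M_pos:
  assumes "w 0 = 0" "i \<le> l" "w i \<noteq> 0"
  shows "0 < quad_form l M w"
proof -
  define S where "S = (\<Sum>j\<le>l. rk j * w j)"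
  define T where "T = (\<Sum>j\<le>l. rk j * x j * w j)"
  define S2 where "S2 = (\<Sum>j\<le>l. rk j * (w j)\<^sup>2)"
  define T2 where "T2 = (\<Sum>j\<le>l. rk j * x j * (w j)\<^sup>2)"
  have "c \<noteq> 0" "R \<noteq> 0" "R + 1 \<noteq> 0" using c_pos R_ge_3 by auto
  have "quad_form l M w = (\<Sum>j\<le>l. c * R * (rk j * (w j)\<^sup>2) + 2 * (rk j * x j * (w j)\<^sup>2)
      - (rk j * w j * (c * R * S + T) + rk j * x j * w j * (S + (R + 2) / (c * R) * T)) / (R + 1))"
    unfolding quad_form_def M_mult_vec S_def[symmetric] T_def[symmetric]
    by (intro sum.cong refl) (simp add: y_def power2_eq_square algebra_simps add_divide_distrib)
  also have "\<dots> = c * R * S2 + 2 * T2 - (S * (c * R * S + T) + T * (S + (R + 2) / (c * R) * T)) / (R + 1)"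
    unfolding S_def T_def S2_def T2_def
    by (simp add: sum_subtractf sum.distrib sum_distrib_left sum_divide_distrib[symmetric] sum_distrib_right)
  also have "\<dots> = c * (R * S2 - S\<^sup>2) + 2 / (c * R) * (c * R * T2 - T\<^sup>2) + (c * S - T)\<^sup>2 / (c * (R + 1))"
    using \<open>c \<noteq> 0\<close> \<open>R \<noteq> 0\<close> \<open>R + 1 \<noteq> 0\<close>
    by (simp add: divide_simps power2_eq_square) (simp add: algebra_simps)
  finally have quad_eq: "quad_form l M w = \<dots>" .
  have "S\<^sup>2 < R * S2"
    unfolding S_def S2_def R_eq_sum
    using weighted_variance_pos[of "{..l}" rk i 0 w] rk_pos assms by simp
  moreover have "T\<^sup>2 \<le> c * R * T2"
    unfolding T_def T2_def sum_rk_x[symmetric]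
    using weighted_variance_nonneg[of "{..l}" "\<lambda>j. rk j * x j" w] rk_pos x_pos
    by (simp add: less_imp_le mult.assoc)
  ultimately show ?thesis unfolding quad_eq using c_pos R_ge_3
    by (intro add_pos_nonneg) (simp_all add: add_pos_nonneg)
qed

lemma A_sym: "A i j = A j i"
  unfolding A_eq using M_sym by simp

lemma A_col_sum:
  assumes "j \<le> l"
  shows "(\<Sum>i\<le>l. A i j) = 0"
proof -
  have "(\<Sum>i\<le>l. A i j) = Q * (\<Sum>i\<le>l. M j i)"
    by (simp add: A_eq M_sym sum_distrib_left)
  then show ?thesis using M_row_sum[OF assms] by simp
qed

lemma quad_form_A_pos:
  assumes "w 0 = 0" "i \<le> l" "w i \<noteq> 0"
  shows "0 < quad_form l A w"
proof -
  have "quad_form l A w = Q * quad_form l M w"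
    unfolding quad_form_def A_eq by (simp add: sum_distrib_left mult_ac)
  then show ?thesis using quad_form_M_pos[OF assms] Q_pos by simp
qed

definition "u j = K / (Q * \<gamma> * y j)"

lemma alpha_beta_eq_A_mult_u:
  assumes "i \<le> l"
  shows "alpha0 l r d c * beta1 l r d g c i - alpha1 l r d c i * beta0 l r d g c = (\<Sum>k\<le>l. A i k * u k)"
proof -
  have "(\<Sum>k\<le>l. A i k * u k) = K / \<gamma> * (\<Sum>k\<le>l. M i k * (1 / y k))"
    unfolding sum_distrib_left using Q_pos by (intro sum.cong refl) (simp add: A_eq u_def)
  then show ?thesis using M_mult_inv_y[OF assms] \<gamma>_pos by (simp add: alpha_beta_eq)
qed

lemma u_diff: "u 1 - u 0 = (mu r d 0 - mu r d 1) * (- 2 * K / (Q * \<gamma> * y 0 * y 1))"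
  using Q_pos \<gamma>_pos y_pos[of 0] y_pos[of 1] two_le_l
  by (simp add: u_def y_def x_def divide_simps) (simp add: algebra_simps)

lemma Fring_eq_pos_multiple_of_slope_difference: "\<exists>\<Phi> > 0. Fring l r d g c = (mu r d 0 - mu r d 1) * \<Phi>"
proof -
  obtain B where B: "mat_inverse (trailing_block l A) = Some B"
    using trailing_block_invertible[of l A] quad_form_A_pos by blast
  have "\<exists>m > 0. \<forall>b u. (\<forall>i \<le> l. b i = (\<Sum>k\<le>l. A i k * u k)) \<longrightarrow>
      b 1 - (\<Sum>j\<in>{2..l}. \<Sum>s\<in>{2..l}. B $$ (s - 2, j - 2) * b s * A j 1) = m * (u 1 - u 0)"
    by (rule trailing_block_elimination[OF two_le_l _ _ _ B])
      (rule A_sym A_col_sum quad_form_A_pos; assumption)+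
  then obtain m where "0 < m" and elim: "\<And>b u. \<forall>i \<le> l. b i = (\<Sum>k\<le>l. A i k * u k) \<Longrightarrow>
      b 1 - (\<Sum>j\<in>{2..l}. \<Sum>s\<in>{2..l}. B $$ (s - 2, j - 2) * b s * A j 1) = m * (u 1 - u 0)"
    by blast
  define b where "b i = alpha0 l r d c * beta1 l r d g c i - alpha1 l r d c i * beta0 l r d g c" for i
  have "Fring l r d g c = b 1 - (\<Sum>j\<in>{2..l}. \<Sum>s\<in>{2..l}. B $$ (s - 2, j - 2) * b s * A j 1)"
    unfolding Fring_def Ainv_def Amat_def trailing_block_def[symmetric] A_def[symmetric] B
    by (simp add: A_def b_def mult.commute)
  also have "\<dots> = m * (u 1 - u 0)"
    by (rule elim) (simp add: b_def alpha_beta_eq_A_mult_u)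
  also have "\<dots> = (mu r d 0 - mu r d 1) * (- 2 * K * m / (Q * \<gamma> * y 0 * y 1))"
    unfolding u_diff by simp
  finally have "Fring l r d g c = (mu r d 0 - mu r d 1) * (- 2 * K * m / (Q * \<gamma> * y 0 * y 1))" .
  moreover have "- 2 * K * m / (Q * \<gamma> * y 0 * y 1) > 0"
  proof (rule divide_pos_pos)
    show "0 < - 2 * K * m" using K_neg \<open>0 < m\<close> by (simp add: mult_neg_pos)
    show "0 < Q * \<gamma> * y 0 * y 1" using Q_pos \<gamma>_pos y_pos[of 0] y_pos[of 1] two_le_l by simp
  qed
  ultimately show ?thesis by blast
qed

end

theorem proposition3p19:
  fixes l :: nat and r d :: "nat \<Rightarrow> int" and g :: int and c :: real
  assumes "l \<ge> 2"
    and "\<And>k. k \<le> l \<Longrightarrow> r k \<ge> 1"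
    and "(\<Sum>k\<le>l. d k) = 0"
    and "g \<ge> 1"
    and "\<And>k. k \<le> l \<Longrightarrow> mu r d k < c"
  shows "(\<exists>\<Phi>::real. \<Phi> > 0 \<and> Fring l r d g c = (mu r d 0 - mu r d 1) * \<Phi>)
    \<and> (Fring l r d g c > 0 \<longrightarrow> mu r d 0 > mu r d 1)"
proof -
  interpret futaki_setting l r d g c using assms by unfold_locales
  obtain \<Phi> where "\<Phi> > 0" and "Fring l r d g c = (mu r d 0 - mu r d 1) * \<Phi>"
    using Fring_eq_pos_multiple_of_slope_difference by blast
  then show ?thesis by (auto simp: zero_less_mult_iff)
qed

end
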